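(* Let $k$ be a positive integer, $n$ a non-negative integer, $i\in\{3,5,7\}$, and let $p$ be a prime with $p\equiv i\pmod 8$. Let $\delta$ be a non-negative integer with $p\mid 8\delta+i$. Put $$N_1=3p\,(8p^kn+8\delta+i),\qquad N_2=24\Big(p^{k-1}n+\frac{8\delta+i-p}{8p}\Big)+3.$$ Then $\mathcal{J}_6(N_1)\equiv\mathcal{J}_6(N_2)\pmod 2$.
   Context: Let $q=e^{2\pi i\tau}$, $(a;q)_\infty=\prod_{j\ge0}(1-aq^j)$, and $\eta(\tau)=q^{1/24}(q;q)_\infty$. Define $$j_6(\tau)=\left(\frac{\eta(2\tau)\eta(3\tau)^3}{\eta(\tau)\eta(6\tau)^3}\right)^3-3=\frac1q+\sum_{n\ge0}\mathcal{J}_6(n)q^n.$$ *)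

theory Defs
  imports "HOL-Computational_Algebra.Formal_Power_Series" "HOL-Number_Theory.Cong"
begin

text \<open>Formal power series (integer coefficients) for 1/(1 - q^j), j \<ge> 1:
  the geometric series sum over k of q^(j k).\<close>
definition geom_inv :: "nat \<Rightarrow> int fps" where
  "geom_inv j = Abs_fps (\<lambda>m. if j dvd m then 1 else 0)"

text \<open>Truncation of the eta-quotient product
  P(q) = prod_{j>=1} ((1-q^{2j}) (1-q^{3j})^3 / ((1-q^j) (1-q^{6j})^3))^3,
  keeping the factors j = 1..M.  The coefficient of q^m of the infinite
  product equals that of this truncation for every M \<ge> m.\<close>
definition eta_quot_trunc :: "nat \<Rightarrow> int fps" where
  "eta_quot_trunc M =
     (\<Prod>j\<in>{1..M}. ((1 - fps_X ^ (2*j)) * (1 - fps_X ^ (3*j)) ^ 3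
                     * geom_inv j * geom_inv (6*j) ^ 3) ^ 3)"

text \<open>j_6(tau) = q^{-1} P(q) - 3 = 1/q + sum_{n\<ge>0} J_6(n) q^n.\<close>
definition J6 :: "nat \<Rightarrow> int" where
  "J6 n = fps_nth (eta_quot_trunc (n + 1)) (n + 1) - (if n = 0 then 3 else 0)"

end

theory Submission
  imports Defs "HOL-Library.Z2" "HOL-Library.Disjoint_Sets"
begin

text \<open>Modulo 2 one has \<open>(q;q)\<^sub>\<infinity> \<equiv> E(q) = \<Prod>\<^sub>j (1 + q\<^sup>j)\<close> and \<open>f(q\<^sup>2) \<equiv> f(q)\<^sup>2\<close>, so the product
  defining \<open>j\<^sub>6 + 3\<close> reduces to \<open>q\<^sup>-\<^sup>1 E(q)\<^sup>3 / E(q\<^sup>3)\<^sup>9\<close>. Jacobi's identity gives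
  \<open>E(q)\<^sup>3 \<equiv> \<psi>(q) = \<Sum>\<^sub>j q\<^bsup>j(j+1)/2\<^esup>\<close>; it is derived here from a finite form of Gauss's identity,
  itself a case of Cauchy's \<open>q\<close>-binomial theorem. An involution on the representations
  \<open>8n + 4 = x\<^sup>2 + 3y\<^sup>2\<close> in odd positive integers gives \<open>\<psi>(q) \<psi>(q\<^sup>3) \<equiv> \<psi>(q\<^sup>4) + q \<psi>(q\<^bsup>12\<^esup>)\<close>.
  Dissecting \<open>\<psi>(q) / \<psi>(q\<^sup>3)\<^sup>3\<close> with these identities shows that for \<open>M \<equiv> 1 (mod 8)\<close> the value
  \<open>\<J>\<^sub>6(3M)\<close> is odd exactly when \<open>M\<close> is a perfect square. The two indices of the theorem are
  \<open>3p\<^sup>2M\<close> and \<open>3M\<close> with \<open>M \<equiv> 1 (mod 8)\<close>, and \<open>p\<^sup>2M\<close> is a square iff \<open>M\<close> is.\<close>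

unbundle fps_syntax

section \<open>Agreement of power series below a given order\<close>

lemma fps_cutoff_eqI: "(\<And>i. i < m \<Longrightarrow> f $ i = g $ i) \<Longrightarrow> fps_cutoff m f = fps_cutoff m g"
  by (simp add: fps_cutoff_eq_fps_cutoff_iff)

lemma fps_cutoff_eqD: "fps_cutoff m f = fps_cutoff m g \<Longrightarrow> i < m \<Longrightarrow> f $ i = g $ i"
  by (simp add: fps_cutoff_eq_fps_cutoff_iff)

lemma fps_cutoff_eq_mono:
  "fps_cutoff m f = fps_cutoff m g \<Longrightarrow> m' \<le> m \<Longrightarrow> fps_cutoff m' f = fps_cutoff m' g"
  by (simp add: fps_cutoff_eq_fps_cutoff_iff)

lemma fps_eq_if_cutoffs_eq: "(\<And>m. fps_cutoff m f = fps_cutoff m g) \<Longrightarrow> f = g"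
  by (metis fps_cutoff_eqD fps_ext lessI)

lemma fps_cutoff_add_cong:
  fixes f f' g g' :: "'a::monoid_add fps"
  shows "fps_cutoff m f = fps_cutoff m f' \<Longrightarrow> fps_cutoff m g = fps_cutoff m g'
   \<Longrightarrow> fps_cutoff m (f + g) = fps_cutoff m (f' + g')"
  by (simp add: fps_cutoff_add)

lemma fps_cutoff_mult_cong:
  fixes f f' g g' :: "'a::semiring_1 fps"
  shows "fps_cutoff m f = fps_cutoff m f' \<Longrightarrow> fps_cutoff m g = fps_cutoff m g'
   \<Longrightarrow> fps_cutoff m (f * g) = fps_cutoff m (f' * g')"
  unfolding fps_cutoff_eq_fps_cutoff_iff fps_mult_nth by (auto intro!: sum.cong)

lemma fps_cutoff_power_cong:
  fixes f g :: "'a::semiring_1 fps"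
  shows "fps_cutoff m f = fps_cutoff m g \<Longrightarrow> fps_cutoff m (f ^ k) = fps_cutoff m (g ^ k)"
  by (induction k) (auto intro: fps_cutoff_mult_cong)

lemma fps_cutoff_prod_cong:
  fixes f g :: "'b \<Rightarrow> 'a::comm_semiring_1 fps"
  shows "(\<And>i. i \<in> A \<Longrightarrow> fps_cutoff m (f i) = fps_cutoff m (g i))
   \<Longrightarrow> fps_cutoff m (prod f A) = fps_cutoff m (prod g A)"
  by (induction A rule: infinite_finite_induct) (auto intro: fps_cutoff_mult_cong)

lemma fps_cutoff_sum_cong:
  fixes f g :: "'b \<Rightarrow> 'a::comm_monoid_add fps"
  shows "(\<And>i. i \<in> A \<Longrightarrow> fps_cutoff m (f i) = fps_cutoff m (g i))
   \<Longrightarrow> fps_cutoff m (sum f A) = fps_cutoff m (sum g A)"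
  by (induction A rule: infinite_finite_induct) (auto intro: fps_cutoff_add_cong)

lemma fps_cutoff_X_power_mult_cong:
  fixes f g :: "'a::semiring_1 fps"
  shows "fps_cutoff m f = fps_cutoff m g
   \<Longrightarrow> fps_cutoff (m + k) (fps_X ^ k * f) = fps_cutoff (m + k) (fps_X ^ k * g)"
  unfolding fps_cutoff_eq_fps_cutoff_iff by (simp add: fps_X_power_mult_nth)

lemma fps_cutoff_inverse_cong:
  fixes f g :: "'a::field fps"
  assumes fg: "fps_cutoff m f = fps_cutoff m g" and f0: "f $ 0 \<noteq> 0"
  shows "fps_cutoff m (inverse f) = fps_cutoff m (inverse g)"
proof (cases "m = 0")
  case False
  then have g0: "g $ 0 \<noteq> 0" using fps_cutoff_eqD[OF fg, of 0] f0 by simp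
  have "fps_cutoff m (inverse f * g * inverse g) = fps_cutoff m (inverse f * f * inverse g)"
    using fg by (intro fps_cutoff_mult_cong) simp_all
  then show ?thesis
    using f0 g0 by (simp add: inverse_mult_eq_1' inverse_mult_eq_1 mult.assoc)
qed simp

lemma fps_cutoff_prod_mono:
  fixes f :: "nat \<Rightarrow> 'a::comm_semiring_1 fps"
  assumes "a \<le> b" and "\<And>i. a < i \<Longrightarrow> fps_cutoff (a + 1) (f i) = fps_cutoff (a + 1) 1"
  shows "fps_cutoff (a + 1) (\<Prod>i\<in>{1..a}. f i) = fps_cutoff (a + 1) (\<Prod>i\<in>{1..b}. f i)"
proof -
  have "{1..b} = {1..a} \<union> {a+1..b}" using assms(1) by auto
  then have "(\<Prod>i\<in>{1..b}. f i) = (\<Prod>i\<in>{1..a}. f i) * (\<Prod>i\<in>{a+1..b}. f i)"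
    by (simp add: prod.union_disjoint)
  moreover have "fps_cutoff (a + 1) ((\<Prod>i\<in>{1..a}. f i) * (\<Prod>i\<in>{a+1..b}. f i))
      = fps_cutoff (a + 1) ((\<Prod>i\<in>{1..a}. f i) * (\<Prod>i\<in>{a+1..b}. 1))"
    using assms(2) by (intro fps_cutoff_mult_cong fps_cutoff_prod_cong) auto
  ultimately show ?thesis by simp
qed

section \<open>Substitution of \<open>q\<^sup>k\<close> for \<open>q\<close>\<close>

lemma fps_compose_X_power_nth:
  assumes "k > 0"
  shows "(f oo fps_X ^ k) $ n = (if k dvd n then f $ (n div k) else 0)"
proof -
  have "(f oo fps_X ^ k) $ n = (\<Sum>i=0..n. f $ i * (if n = k * i then 1 else 0))"
    by (simp add: fps_compose_nth power_mult[symmetric] fps_X_power_nth)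
  also have "\<dots> = (\<Sum>i\<in>{0..n}. if i = n div k \<and> k dvd n then f $ i else 0)"
    using assms by (intro sum.cong) (auto simp: mult.commute)
  also have "\<dots> = (if k dvd n then f $ (n div k) else 0)"
    using assms by (auto simp: div_le_dividend)
  finally show ?thesis .
qed

lemma fps_cutoff_compose_X_power_cong:
  "k > 0 \<Longrightarrow> fps_cutoff m f = fps_cutoff m g
   \<Longrightarrow> fps_cutoff m (f oo fps_X ^ k) = fps_cutoff m (g oo fps_X ^ k)"
  unfolding fps_cutoff_eq_fps_cutoff_iff fps_compose_X_power_nth
  by (auto intro: le_less_trans[OF div_le_dividend])

lemma fps_compose_X_power_compose_X_power:
  "j > 0 \<Longrightarrow> k > 0 \<Longrightarrow>
   (f oo fps_X ^ j) oo fps_X ^ k = f oo (fps_X ^ (j * k) :: 'a::comm_ring_1 fps)"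
  by (rule fps_ext)
    (auto simp: fps_compose_X_power_nth div_mult2_eq dvd_div_iff_mult mult.commute
          dest: dvd_mult_left)

section \<open>Power series over \<open>\<int>/2\<close>\<close>

lemma bit_fps_add_self: "(f :: bit fps) + f = 0"
proof -
  have "(2 :: bit fps) = 0"
    by (metis fps_numeral_fps_const bit_2_eq_0 fps_const_0_eq_0)
  then show ?thesis by (metis mult_2 mult_zero_left)
qed

lemma bit_fps_diff_eq_add: "(f :: bit fps) - g = f + g"
  by (metis add_eq_0_iff2 bit_fps_add_self diff_conv_add_uminus)

lemma bit_fps_square_sum: "(sum f A :: bit fps)\<^sup>2 = (\<Sum>i\<in>A. (f i)\<^sup>2)"
proof (induction A rule: infinite_finite_induct)
  case (insert a A)
  have "(x + y)\<^sup>2 = x\<^sup>2 + y\<^sup>2 + (x * y + x * y)" for x y :: "bit fps"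
    by (simp add: power2_eq_square algebra_simps)
  with insert show ?case by (simp add: bit_fps_add_self)
qed simp_all

text \<open>Squaring is additive and fixes the constants \<open>0, 1\<close>, so this holds for polynomials; a series
  agrees with a polynomial below any given order.\<close>
lemma bit_fps_square_eq_compose: "(f :: bit fps)\<^sup>2 = f oo fps_X\<^sup>2"
proof (rule fps_eq_if_cutoffs_eq)
  fix m
  define p where "p k = (\<Sum>i<m. fps_const (f $ i) * fps_X ^ (k * i))" for k :: nat
  have p_nth: "p k $ n = (if k dvd n \<and> n div k < m then f $ (n div k) else 0)" if "k > 0" for k n
  proof -
    have "p k $ n = (\<Sum>i<m. if i = n div k \<and> k dvd n then f $ i else 0)"
      unfolding p_def fps_sum_nth using that by (intro sum.cong) (auto simp: fps_X_power_nth)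
    then show ?thesis by (auto simp: sum.delta')
  qed
  have f_p: "fps_cutoff m f = fps_cutoff m (p 1)"
    by (rule fps_cutoff_eqI) (simp add: p_nth)
  have const_square: "(fps_const c)\<^sup>2 = fps_const c" and of_bool_eq_one: "of_bool (c = 1) = c" for c :: bit
    by (cases c; simp add: fps_const_power[symmetric])+
  have "(p 1)\<^sup>2 = p 2"
    unfolding p_def bit_fps_square_sum
    by (simp add: power_mult_distrib const_square of_bool_eq_one power_mult[symmetric] mult.commute)
  also have "p 2 = p 1 oo fps_X\<^sup>2"
    by (rule fps_ext) (simp add: fps_compose_X_power_nth p_nth)
  finally have "(p 1)\<^sup>2 = p 1 oo fps_X\<^sup>2" .
  moreover have "fps_cutoff m (f\<^sup>2) = fps_cutoff m ((p 1)\<^sup>2)"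
    using f_p by (rule fps_cutoff_power_cong)
  moreover have "fps_cutoff m (f oo fps_X\<^sup>2) = fps_cutoff m (p 1 oo fps_X\<^sup>2)"
    using f_p by (intro fps_cutoff_compose_X_power_cong) simp_all
  ultimately show "fps_cutoff m (f\<^sup>2) = fps_cutoff m (f oo fps_X\<^sup>2)" by simp
qed

lemma bit_fps_power4_eq_compose: "(f :: bit fps) ^ 4 = f oo fps_X ^ 4"
proof -
  have "f ^ 4 = (f\<^sup>2)\<^sup>2" using power_mult[of f 2 2] by simp
  also have "\<dots> = f\<^sup>2 oo fps_X\<^sup>2" by (rule bit_fps_square_eq_compose)
  also have "\<dots> = (f oo fps_X\<^sup>2) oo fps_X\<^sup>2" by (simp only: bit_fps_square_eq_compose[of f])
  finally show ?thesis by (simp add: fps_compose_X_power_compose_X_power)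
qed

definition fps_mod2 :: "int fps \<Rightarrow> bit fps" where
  "fps_mod2 f = Abs_fps (\<lambda>n. of_int (f $ n))"

lemma fps_mod2_nth [simp]: "fps_mod2 f $ n = of_int (f $ n)"
  by (simp add: fps_mod2_def)

lemma fps_mod2_add: "fps_mod2 (f + g) = fps_mod2 f + fps_mod2 g"
  by (rule fps_ext) simp

lemma fps_mod2_diff: "fps_mod2 (f - g) = fps_mod2 f + fps_mod2 g"
proof -
  have "fps_mod2 (f - g) = fps_mod2 f - fps_mod2 g" by (rule fps_ext) simp
  then show ?thesis by (simp only: bit_fps_diff_eq_add)
qed

lemma fps_mod2_mult: "fps_mod2 (f * g) = fps_mod2 f * fps_mod2 g"
  by (rule fps_ext) (simp add: fps_mult_nth)

lemma fps_mod2_X [simp]: "fps_mod2 fps_X = fps_X"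
  by (rule fps_ext) (simp add: fps_X_nth)

lemma fps_mod2_0 [simp]: "fps_mod2 0 = 0"
  by (rule fps_ext) simp

lemma fps_mod2_1 [simp]: "fps_mod2 1 = 1"
  by (rule fps_ext) simp

lemma fps_mod2_power: "fps_mod2 (f ^ k) = fps_mod2 f ^ k"
  by (induction k) (simp_all add: fps_mod2_mult)

lemma fps_mod2_prod: "fps_mod2 (prod f A) = (\<Prod>i\<in>A. fps_mod2 (f i))"
  by (induction A rule: infinite_finite_induct) (simp_all add: fps_mod2_mult)

lemma fps_mod2_sum: "fps_mod2 (sum f A) = (\<Sum>i\<in>A. fps_mod2 (f i))"
  by (induction A rule: infinite_finite_induct) (simp_all add: fps_mod2_add)

lemmas fps_mod2_simps =
  fps_mod2_add fps_mod2_diff fps_mod2_mult fps_mod2_power fps_mod2_prod fps_mod2_sum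

lemma fps_mod2_cutoff_cong:
  "fps_cutoff m f = fps_cutoff m g \<Longrightarrow> fps_cutoff m (fps_mod2 f) = fps_cutoff m (fps_mod2 g)"
  by (simp add: fps_cutoff_eq_fps_cutoff_iff)

lemma of_int_bit_eq_iff: "(of_int a :: bit) = of_int b \<longleftrightarrow> [a = b] (mod 2)"
proof -
  have reduce: "(of_int a :: bit) = (if a mod 2 = 0 then 0 else 1)" for a
  proof -
    have "a = 2 * (a div 2) + a mod 2" by simp
    then have "(of_int a :: bit) = 2 * of_int (a div 2) + of_int (a mod 2)"
      by (metis of_int_add of_int_mult of_int_numeral)
    then show ?thesis by (simp add: mod2_eq_if)
  qed
  show ?thesis by (simp add: reduce cong_def mod2_eq_if)
qed

section \<open>Gaussian binomial coefficients and Gauss's identity\<close>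

definition triangular :: "nat \<Rightarrow> nat" where
  "triangular j = j * (j + 1) div 2"

lemma two_times_triangular: "2 * triangular j = j * (j + 1)"
  by (simp add: triangular_def)

lemma triangular_0 [simp]: "triangular 0 = 0"
  by (simp add: triangular_def)

lemma triangular_Suc: "triangular (Suc j) = triangular j + Suc j"
  using two_times_triangular[of j] two_times_triangular[of "Suc j"] by simp

lemma le_triangular: "j \<le> triangular j"
  by (induction j) (auto simp: triangular_Suc)

lemma strict_mono_triangular: "strict_mono triangular"
  by (simp add: strict_mono_Suc_iff triangular_Suc)

lemma triangular_eq_iff [simp]: "triangular i = triangular j \<longleftrightarrow> i = j"
  using strict_mono_triangular by (rule strict_mono_eq)

fun qbinom :: "nat \<Rightarrow> nat \<Rightarrow> int fps" where
  "qbinom n 0 = 1"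
| "qbinom 0 (Suc k) = 0"
| "qbinom (Suc n) (Suc k) = qbinom n (Suc k) + fps_X ^ (n - k) * qbinom n k"

lemma qbinom_eq_0: "n < k \<Longrightarrow> qbinom n k = 0"
  by (induction n k rule: qbinom.induct) auto

lemma qbinom_self [simp]: "qbinom n n = 1"
  by (induction n) (auto simp: qbinom_eq_0)

lemma qbinom_Suc_right_ratio:
  "(1 - fps_X ^ Suc k) * qbinom n (Suc k) = (1 - fps_X ^ (n - k)) * qbinom n k"
proof (induction n arbitrary: k)
  case (Suc n)
  show ?case
  proof (cases "k \<le> n")
    case False
    then show ?thesis by (cases "k = Suc n") (auto simp: qbinom_eq_0)
  next
    case True
    have X_power_add: "fps_X ^ (n - j) * fps_X ^ Suc j = (fps_X ^ Suc n :: int fps)" if "j \<le> n" for j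
      using that by (simp flip: power_add)
    have "(1 - fps_X ^ Suc k) * qbinom (Suc n) (Suc k)
        = (1 - fps_X ^ Suc k) * qbinom n (Suc k) + fps_X ^ (n - k) * (1 - fps_X ^ Suc k) * qbinom n k"
      by (simp add: algebra_simps)
    also have "\<dots> = (1 - fps_X ^ (n - k)) * qbinom n k
        + (fps_X ^ (n - k) - fps_X ^ (n - k) * fps_X ^ Suc k) * qbinom n k"
      by (subst Suc.IH) (simp add: algebra_simps)
    also have "fps_X ^ (n - k) * fps_X ^ Suc k = (fps_X ^ Suc n :: int fps)"
      using True by (rule X_power_add)
    finally have left: "(1 - fps_X ^ Suc k) * qbinom (Suc n) (Suc k) = (1 - fps_X ^ Suc n) * qbinom n k"
      by (simp add: algebra_simps)
    show ?thesis
    proof (cases k)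
      case (Suc k')
      have "(1 - fps_X ^ (Suc n - k)) * qbinom (Suc n) k
          = (1 - fps_X ^ (n - k')) * qbinom n k + fps_X ^ (n - k') * ((1 - fps_X ^ (n - k')) * qbinom n k')"
        using Suc by (simp add: algebra_simps)
      also have "\<dots> = (1 - fps_X ^ (n - k')) * qbinom n k + fps_X ^ (n - k') * ((1 - fps_X ^ k) * qbinom n k)"
        using Suc.IH[of k'] Suc by simp
      also have "\<dots> = (1 - fps_X ^ Suc n) * qbinom n k"
        using X_power_add[of k'] Suc True by (simp add: algebra_simps)
      finally show ?thesis using left by simp
    qed (use left in simp)
  qed
qed (cases k; simp)

lemma qbinom_Suc_Suc': "qbinom (Suc n) (Suc k) = qbinom n k + fps_X ^ Suc k * qbinom n (Suc k)"
proof -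
  have "qbinom n (Suc k) - fps_X ^ Suc k * qbinom n (Suc k) = qbinom n k - fps_X ^ (n - k) * qbinom n k"
    using qbinom_Suc_right_ratio[of k n] by (simp only: left_diff_distrib mult_1)
  then have "qbinom n (Suc k) + fps_X ^ (n - k) * qbinom n k = qbinom n k + fps_X ^ Suc k * qbinom n (Suc k)"
    by (simp add: algebra_simps)
  then show ?thesis by simp
qed

lemma qbinom_symmetric: "k \<le> n \<Longrightarrow> qbinom n (n - k) = qbinom n k"
proof (induction n arbitrary: k)
  case (Suc n)
  show ?case
  proof (cases k)
    case (Suc k')
    show ?thesis
    proof (cases "k' = n")
      case False
      then have "k' < n" using Suc \<open>k \<le> Suc n\<close> by simp
      define j where "j = n - Suc k'"
      have j: "n - k' = Suc j" "n - Suc j = k'" "n - j = Suc k'"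
        using \<open>k' < n\<close> by (simp_all add: j_def)
      have "qbinom (Suc n) (Suc n - k) = qbinom n j + fps_X ^ Suc j * qbinom n (Suc j)"
        using Suc j by (simp only: diff_Suc_Suc qbinom_Suc_Suc')
      also have "\<dots> = qbinom n (Suc k') + fps_X ^ Suc j * qbinom n k'"
        using Suc.IH[of "Suc k'"] Suc.IH[of k'] j \<open>k' < n\<close> by (simp add: j_def)
      finally show ?thesis using Suc j by simp
    qed (use Suc in \<open>simp add: qbinom_eq_0\<close>)
  qed simp
qed simp

definition qpoch :: "nat \<Rightarrow> int fps" where
  "qpoch a = (\<Prod>i\<in>{1..a}. 1 - fps_X ^ i)"

definition qpoch_neg :: "nat \<Rightarrow> int fps" where
  "qpoch_neg a = (\<Prod>i\<in>{1..a}. 1 + fps_X ^ i)"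

lemma qpoch_Suc: "qpoch (Suc a) = qpoch a * (1 - fps_X ^ Suc a)"
  unfolding qpoch_def by (simp add: atLeastAtMostSuc_conv mult.commute)

lemma qpoch_neg_Suc: "qpoch_neg (Suc a) = qpoch_neg a * (1 + fps_X ^ Suc a)"
  unfolding qpoch_neg_def by (simp add: atLeastAtMostSuc_conv mult.commute)

lemma fps_cutoff_qpoch_mono:
  "a \<le> b \<Longrightarrow> fps_cutoff (a + 1) (qpoch a) = fps_cutoff (a + 1) (qpoch b)"
  unfolding qpoch_def
  by (intro fps_cutoff_prod_mono) (auto intro!: fps_cutoff_eqI simp: fps_X_power_nth)

lemma qbinom_mult_qpoch_cutoff:
  "k \<le> n \<Longrightarrow> fps_cutoff (k + 1) (qbinom n k * qpoch (n - k)) = fps_cutoff (k + 1) 1"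
proof (induction n arbitrary: k)
  case 0
  then show ?case by (simp add: qpoch_def)
next
  case (Suc n)
  show ?case
  proof (cases k)
    case 0
    then show ?thesis using fps_cutoff_qpoch_mono[of 0 "Suc n"] by (simp add: qpoch_def)
  next
    case (Suc k')
    show ?thesis
    proof (cases "k' = n")
      case False
      then have kn: "k' < n" using Suc \<open>k \<le> Suc n\<close> by simp
      have e: "n - k' = Suc (n - Suc k')" using kn by simp
      have split: "qbinom (Suc n) k * qpoch (Suc n - k)
          = qbinom n (Suc k') * qpoch (n - Suc k') * (1 - fps_X ^ (n - k'))
            + fps_X ^ (n - k') * (qbinom n k' * qpoch (n - k'))"
        using Suc by (simp add: e qpoch_Suc algebra_simps)
      have first: "fps_cutoff (k + 1) (qbinom n (Suc k') * qpoch (n - Suc k') * (1 - fps_X ^ (n - k')))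
          = fps_cutoff (k + 1) (1 * (1 - fps_X ^ (n - k')))"
        using Suc.IH[of "Suc k'"] kn Suc by (intro fps_cutoff_mult_cong) auto
      have "fps_cutoff (k' + 1 + (n - k')) (fps_X ^ (n - k') * (qbinom n k' * qpoch (n - k')))
          = fps_cutoff (k' + 1 + (n - k')) (fps_X ^ (n - k') * 1)"
        using Suc.IH[of k'] kn by (intro fps_cutoff_X_power_mult_cong) auto
      then have second: "fps_cutoff (k + 1) (fps_X ^ (n - k') * (qbinom n k' * qpoch (n - k')))
          = fps_cutoff (k + 1) (fps_X ^ (n - k') * 1)"
        by (rule fps_cutoff_eq_mono) (use kn Suc in simp)
      have "fps_cutoff (k + 1) (qbinom (Suc n) k * qpoch (Suc n - k))
          = fps_cutoff (k + 1) (1 * (1 - fps_X ^ (n - k')) + fps_X ^ (n - k') * 1)"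
        unfolding split by (rule fps_cutoff_add_cong[OF first second])
      then show ?thesis by simp
    qed (use Suc in \<open>simp add: qpoch_def\<close>)
  qed
qed

text \<open>\<open>cauchy_exp b m = (m - b)(m - b + 1)/2\<close>, computed in the integers.\<close>
definition cauchy_exp :: "nat \<Rightarrow> nat \<Rightarrow> nat" where
  "cauchy_exp b m = (if b \<le> m then triangular (m - b) else triangular (b - m - 1))"

definition cauchy_term :: "nat \<Rightarrow> nat \<Rightarrow> nat \<Rightarrow> int fps" where
  "cauchy_term a b m = fps_X ^ cauchy_exp b m * qbinom (a + b) m"

definition cauchy_sum :: "nat \<Rightarrow> nat \<Rightarrow> int fps" where
  "cauchy_sum a b = (\<Sum>m\<le>a+b. cauchy_term a b m)"

lemma cauchy_exp_Suc: "cauchy_exp b (Suc m) + b = cauchy_exp b m + Suc m"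
proof (cases "b \<le> m")
  case True
  then have "Suc m - b = Suc (m - b)" by simp
  then show ?thesis using True by (simp add: cauchy_exp_def triangular_Suc)
next
  case False
  show ?thesis
  proof (cases "Suc m = b")
    case False
    then have "b - m - 1 = Suc (b - Suc m - 1)" using \<open>\<not> b \<le> m\<close> by simp
    then show ?thesis using \<open>\<not> b \<le> m\<close> False by (simp add: cauchy_exp_def triangular_Suc)
  qed (simp add: cauchy_exp_def)
qed

lemma cauchy_exp_Suc_Suc: "cauchy_exp (Suc b) (Suc m) = cauchy_exp b m"
  by (simp add: cauchy_exp_def)

lemma cauchy_term_Suc_left:
  "cauchy_term (Suc a) b (Suc m) = cauchy_term a b (Suc m) + fps_X ^ Suc a * cauchy_term a b m"
proof (cases "m \<le> a + b")
  case True
  have e: "cauchy_exp b (Suc m) + (a + b - m) = Suc a + cauchy_exp b m"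
    using cauchy_exp_Suc[of b m] True by simp
  have "cauchy_term (Suc a) b (Suc m) = fps_X ^ cauchy_exp b (Suc m) * qbinom (a + b) (Suc m)
        + fps_X ^ (cauchy_exp b (Suc m) + (a + b - m)) * qbinom (a + b) m"
    by (simp add: cauchy_term_def algebra_simps power_add)
  then show ?thesis
    by (simp only: e) (simp add: cauchy_term_def power_add algebra_simps)
qed (simp add: cauchy_term_def qbinom_eq_0)

lemma cauchy_term_Suc_right:
  "cauchy_term 0 (Suc b) (Suc m) = fps_X ^ b * cauchy_term 0 b (Suc m) + cauchy_term 0 b m"
proof -
  have e: "cauchy_exp (Suc b) (Suc m) + Suc m = b + cauchy_exp b (Suc m)"
    using cauchy_exp_Suc[of b m] by (simp add: cauchy_exp_Suc_Suc)
  have "cauchy_term 0 (Suc b) (Suc m) = fps_X ^ cauchy_exp (Suc b) (Suc m) * qbinom b m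
      + fps_X ^ (cauchy_exp (Suc b) (Suc m) + Suc m) * qbinom b (Suc m)"
    unfolding cauchy_term_def add_0 qbinom_Suc_Suc' by (simp only: distrib_left power_add mult.assoc)
  also have "\<dots> = fps_X ^ b * cauchy_term 0 b (Suc m) + cauchy_term 0 b m"
    by (simp only: e) (simp add: cauchy_term_def power_add cauchy_exp_Suc_Suc algebra_simps)
  finally show ?thesis .
qed

lemma cauchy_term_beyond: "cauchy_term a b (Suc (a + b)) = 0"
  by (simp add: cauchy_term_def qbinom_eq_0)

lemma cauchy_sum_Suc_left: "cauchy_sum (Suc a) b = (1 + fps_X ^ Suc a) * cauchy_sum a b"
proof -
  have "cauchy_sum (Suc a) b = cauchy_term (Suc a) b 0 + (\<Sum>m\<le>a+b. cauchy_term (Suc a) b (Suc m))"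
    unfolding cauchy_sum_def add_Suc by (simp only: sum.atMost_Suc_shift)
  also have "\<dots> = (cauchy_term a b 0 + (\<Sum>m\<le>a+b. cauchy_term a b (Suc m)))
      + fps_X ^ Suc a * cauchy_sum a b"
    using cauchy_term_def[of _ b 0]
    by (simp add: cauchy_term_Suc_left sum.distrib sum_distrib_left cauchy_sum_def)
  also have "cauchy_term a b 0 + (\<Sum>m\<le>a+b. cauchy_term a b (Suc m)) = cauchy_sum a b"
    using cauchy_term_beyond[of a b] by (simp only: cauchy_sum_def sum.atMost_Suc_shift[symmetric]) simp
  finally show ?thesis by (simp add: algebra_simps)
qed

lemma cauchy_sum_Suc_right: "cauchy_sum 0 (Suc b) = (1 + fps_X ^ b) * cauchy_sum 0 b"
proof -
  have "cauchy_sum 0 (Suc b) = cauchy_term 0 (Suc b) 0 + (\<Sum>m\<le>b. cauchy_term 0 (Suc b) (Suc m))"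
    unfolding cauchy_sum_def add_0 by (simp only: sum.atMost_Suc_shift)
  also have "cauchy_term 0 (Suc b) 0 = fps_X ^ b * cauchy_term 0 b 0"
    by (cases b) (simp_all add: cauchy_term_def cauchy_exp_def triangular_Suc power_add)
  also have "fps_X ^ b * cauchy_term 0 b 0 + (\<Sum>m\<le>b. cauchy_term 0 (Suc b) (Suc m))
      = fps_X ^ b * (cauchy_term 0 b 0 + (\<Sum>m\<le>b. cauchy_term 0 b (Suc m))) + cauchy_sum 0 b"
    by (simp add: cauchy_term_Suc_right sum.distrib sum_distrib_left cauchy_sum_def algebra_simps)
  also have "cauchy_term 0 b 0 + (\<Sum>m\<le>b. cauchy_term 0 b (Suc m)) = cauchy_sum 0 b"
    using cauchy_term_beyond[of 0 b] by (simp only: cauchy_sum_def sum.atMost_Suc_shift[symmetric]) simp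
  finally show ?thesis by (simp add: algebra_simps)
qed

lemma cauchy_sum_eq_prod: "cauchy_sum a b = qpoch_neg a * (\<Prod>i<b. 1 + fps_X ^ i)"
proof (induction a)
  case 0
  show ?case
  proof (induction b)
    case 0
    then show ?case by (simp add: cauchy_sum_def cauchy_term_def cauchy_exp_def qpoch_neg_def)
  qed (simp add: cauchy_sum_Suc_right qpoch_neg_def mult.commute)
next
  case (Suc a)
  then show ?case by (simp add: cauchy_sum_Suc_left qpoch_neg_Suc algebra_simps)
qed

lemma cauchy_sum_diagonal:
  "cauchy_sum a (Suc a) = 2 * (\<Sum>j\<le>a. fps_X ^ triangular j * qbinom (2 * a + 1) (a + 1 + j))"
proof -
  let ?lo = "(\<lambda>j. a - j) ` {..a}" and ?hi = "(\<lambda>j. a + 1 + j) ` {..a}"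
  have split: "{..a + Suc a} = ?lo \<union> ?hi"
  proof (rule set_eqI, rule iffI)
    fix m assume "m \<in> {..a + Suc a}"
    then show "m \<in> ?lo \<union> ?hi"
      by (cases "m \<le> a") (auto intro: image_eqI[where x = "a - m"] image_eqI[where x = "m - a - 1"])
  qed auto
  have "cauchy_sum a (Suc a) = sum (cauchy_term a (Suc a)) ?lo + sum (cauchy_term a (Suc a)) ?hi"
    unfolding cauchy_sum_def split by (rule sum.union_disjoint) auto
  also have "sum (cauchy_term a (Suc a)) ?lo = (\<Sum>j\<le>a. cauchy_term a (Suc a) (a - j))"
    by (rule sum.reindex_cong[where l = "\<lambda>j. a - j"]) (auto simp: inj_on_def)
  also have "sum (cauchy_term a (Suc a)) ?hi = (\<Sum>j\<le>a. cauchy_term a (Suc a) (a + 1 + j))"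
    by (rule sum.reindex_cong[where l = "\<lambda>j. a + 1 + j"]) (auto simp: inj_on_def)
  also have "(\<Sum>j\<le>a. cauchy_term a (Suc a) (a - j))
      = (\<Sum>j\<le>a. fps_X ^ triangular j * qbinom (2 * a + 1) (a + 1 + j))"
  proof (rule sum.cong)
    fix j assume j: "j \<in> {..a}"
    then have "qbinom (2 * a + 1) (a - j) = qbinom (2 * a + 1) (2 * a + 1 - (a + 1 + j))"
      by (simp add: algebra_simps)
    also have "\<dots> = qbinom (2 * a + 1) (a + 1 + j)"
      using j by (intro qbinom_symmetric) auto
    finally show "cauchy_term a (Suc a) (a - j) = fps_X ^ triangular j * qbinom (2 * a + 1) (a + 1 + j)"
      using j by (simp add: cauchy_term_def cauchy_exp_def Suc_diff_le mult_2)
  qed simp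
  also have "(\<Sum>j\<le>a. cauchy_term a (Suc a) (a + 1 + j))
      = (\<Sum>j\<le>a. fps_X ^ triangular j * qbinom (2 * a + 1) (a + 1 + j))"
    by (intro sum.cong) (simp_all add: cauchy_term_def cauchy_exp_def mult_2 del: qbinom.simps)
  finally show ?thesis by simp
qed

text \<open>A finite form of Gauss's identity \<open>(q\<^sup>2;q\<^sup>2)\<^sub>\<infinity> / (q;q\<^sup>2)\<^sub>\<infinity> = \<Sum>\<^sub>j q\<^bsup>j(j+1)/2\<^esup>\<close>,
  obtained from the middle of Cauchy's theorem with \<open>b = a + 1\<close>.\<close>
lemma gauss_identity_finite:
  "(\<Sum>j\<le>a. fps_X ^ triangular j * qbinom (2 * a + 1) (a + 1 + j)) = (qpoch_neg a)\<^sup>2"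
proof -
  have "{..<Suc a} = insert 0 {1..a}" by auto
  then have "(\<Prod>i<Suc a. 1 + fps_X ^ i :: int fps) = 2 * qpoch_neg a"
    by (simp add: qpoch_neg_def)
  then have "(2 :: int fps) * (\<Sum>j\<le>a. fps_X ^ triangular j * qbinom (2 * a + 1) (a + 1 + j))
      = 2 * (qpoch_neg a)\<^sup>2"
    using cauchy_sum_diagonal[of a] cauchy_sum_eq_prod[of a "Suc a"] by (simp add: power2_eq_square)
  moreover have "(2 :: int fps) \<noteq> 0"
    by (metis fps_numeral_fps_const fps_const_eq_0_iff zero_neq_numeral)
  ultimately show ?thesis by simp
qed

lemma qpoch_neg_square_mult_qpoch_cutoff:
  "fps_cutoff (a + 1) ((qpoch_neg a)\<^sup>2 * qpoch a) = fps_cutoff (a + 1) (\<Sum>j\<le>a. fps_X ^ triangular j)"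
proof -
  have "(qpoch_neg a)\<^sup>2 * qpoch a
      = (\<Sum>j\<le>a. fps_X ^ triangular j * (qbinom (2 * a + 1) (a + 1 + j) * qpoch a))"
    by (simp add: gauss_identity_finite[symmetric] sum_distrib_right mult.assoc)
  also have "fps_cutoff (a + 1) \<dots> = fps_cutoff (a + 1) (\<Sum>j\<le>a. fps_X ^ triangular j * 1)"
  proof (rule fps_cutoff_sum_cong)
    fix j assume "j \<in> {..a}"
    then have j: "j \<le> a" by simp
    let ?b = "qbinom (2 * a + 1) (a + 1 + j)"
    have "fps_cutoff (a - j + 1) (?b * qpoch (a - j)) = fps_cutoff (a - j + 1) 1"
      using qbinom_mult_qpoch_cutoff[of "a + 1 + j" "2 * a + 1"] j
      by (auto elim!: fps_cutoff_eq_mono)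
    moreover have "fps_cutoff (a - j + 1) (?b * qpoch a) = fps_cutoff (a - j + 1) (?b * qpoch (a - j))"
      using fps_cutoff_qpoch_mono[of "a - j" a] by (intro fps_cutoff_mult_cong) simp_all
    ultimately have "fps_cutoff (a - j + 1 + triangular j) (fps_X ^ triangular j * (?b * qpoch a))
        = fps_cutoff (a - j + 1 + triangular j) (fps_X ^ triangular j * 1)"
      by (intro fps_cutoff_X_power_mult_cong) simp
    then show "fps_cutoff (a + 1) (fps_X ^ triangular j * (?b * qpoch a))
        = fps_cutoff (a + 1) (fps_X ^ triangular j * 1)"
      by (rule fps_cutoff_eq_mono) (use j le_triangular[of j] in simp)
  qed
  finally show ?thesis by simp
qed

section \<open>Jacobi's identity modulo 2\<close>

definition qpoch_bit :: "nat \<Rightarrow> bit fps" where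
  "qpoch_bit a = (\<Prod>i\<in>{1..a}. 1 + fps_X ^ i)"

text \<open>The reduction of \<open>(q;q)\<^sub>\<infinity>\<close> modulo 2, coefficientwise the limit of \<open>qpoch_bit\<close>.\<close>
definition euler_bit :: "bit fps" where
  "euler_bit = Abs_fps (\<lambda>n. qpoch_bit n $ n)"

definition psi_bit :: "bit fps" where
  "psi_bit = Abs_fps (\<lambda>n. of_bool (\<exists>j. n = triangular j))"

lemma fps_cutoff_qpoch_bit_mono:
  "a \<le> b \<Longrightarrow> fps_cutoff (a + 1) (qpoch_bit a) = fps_cutoff (a + 1) (qpoch_bit b)"
  unfolding qpoch_bit_def
  by (intro fps_cutoff_prod_mono) (auto intro!: fps_cutoff_eqI simp: fps_X_power_nth)

lemma fps_cutoff_euler_bit: "fps_cutoff (a + 1) euler_bit = fps_cutoff (a + 1) (qpoch_bit a)"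
proof (rule fps_cutoff_eqI)
  fix i assume "i < a + 1"
  then show "euler_bit $ i = qpoch_bit a $ i"
    using fps_cutoff_qpoch_bit_mono[of i a] by (simp add: euler_bit_def fps_cutoff_eq_fps_cutoff_iff)
qed

lemma euler_bit_nth_0 [simp]: "euler_bit $ 0 = 1"
  by (simp add: euler_bit_def qpoch_bit_def)

lemma psi_bit_nth_0 [simp]: "psi_bit $ 0 = 1"
  by (auto simp: psi_bit_def intro: exI[of _ 0])

lemma fps_cutoff_psi_bit:
  "fps_cutoff (a + 1) psi_bit = fps_cutoff (a + 1) (\<Sum>j\<le>a. fps_X ^ triangular j)"
proof (rule fps_cutoff_eqI)
  fix n assume n: "n < a + 1"
  have "(\<Sum>j\<le>a. fps_X ^ triangular j :: bit fps) $ n = (\<Sum>j\<le>a. if n = triangular j then 1 else 0)"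
    by (simp add: fps_sum_nth fps_X_power_nth)
  also have "\<dots> = of_bool (\<exists>j. n = triangular j)"
  proof (cases "\<exists>j. n = triangular j")
    case True
    then obtain j0 where j0: "n = triangular j0" by blast
    then have "j0 \<le> a" using le_triangular[of j0] n by simp
    moreover have "(\<Sum>j\<le>a. if n = triangular j then 1 else 0 :: bit) = (\<Sum>j\<le>a. if j = j0 then 1 else 0)"
      using j0 by (intro sum.cong) auto
    ultimately show ?thesis using True by simp
  qed simp
  finally show "psi_bit $ n = (\<Sum>j\<le>a. fps_X ^ triangular j) $ n"
    by (simp add: psi_bit_def)
qed

lemma fps_mod2_qpoch: "fps_mod2 (qpoch a) = qpoch_bit a"
  by (simp add: qpoch_def qpoch_bit_def fps_mod2_simps)

lemma fps_mod2_qpoch_neg: "fps_mod2 (qpoch_neg a) = qpoch_bit a"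
  by (simp add: qpoch_neg_def qpoch_bit_def fps_mod2_simps)

text \<open>Modulo 2 one has \<open>(-q;q)\<^sub>a = (q;q)\<^sub>a\<close>, so the truncated Gauss identity becomes
  \<open>(q;q)\<^sub>\<infinity>\<^sup>3 \<equiv> \<Sum>\<^sub>j q\<^bsup>j(j+1)/2\<^esup>\<close>, the reduction of Jacobi's identity.\<close>
lemma euler_bit_cube: "euler_bit ^ 3 = psi_bit"
proof (rule fps_eq_if_cutoffs_eq)
  fix m
  have "fps_cutoff (m + 1) (euler_bit ^ 3) = fps_cutoff (m + 1) (qpoch_bit m ^ 3)"
    using fps_cutoff_euler_bit by (rule fps_cutoff_power_cong)
  also have "\<dots> = fps_cutoff (m + 1) (fps_mod2 ((qpoch_neg m)\<^sup>2 * qpoch m))"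
    by (simp add: fps_mod2_simps fps_mod2_qpoch fps_mod2_qpoch_neg power3_eq_cube power2_eq_square)
  also have "\<dots> = fps_cutoff (m + 1) (fps_mod2 (\<Sum>j\<le>m. fps_X ^ triangular j))"
    using qpoch_neg_square_mult_qpoch_cutoff by (rule fps_mod2_cutoff_cong)
  also have "\<dots> = fps_cutoff (m + 1) psi_bit"
    using fps_cutoff_psi_bit[of m] by (simp add: fps_mod2_simps)
  finally show "fps_cutoff m (euler_bit ^ 3) = fps_cutoff m psi_bit"
    by (rule fps_cutoff_eq_mono) simp
qed

section \<open>A product formula for \<open>\<psi>(q) \<psi>(q\<^sup>3)\<close> modulo 2\<close>

lemma card_mod2_eq_card_fixed_points:
  assumes "finite A" and "\<And>x. x \<in> A \<Longrightarrow> h x \<in> A" and "\<And>x. x \<in> A \<Longrightarrow> h (h x) = x"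
  shows "(of_nat (card A) :: bit) = of_nat (card {x \<in> A. h x = x})"
proof -
  let ?F = "{x \<in> A. h x = x}"
  have "(\<Sum>x\<in>A - ?F. (1 :: bit)) = 0"
  proof (rule sum_involution_eq_0[where h = h])
    fix x assume "x \<in> A - ?F"
    with assms(2,3) show "h x \<in> A - ?F" "h (h x) = x" "h x \<noteq> x" "(1 :: bit) + 1 = 0"
      by (metis (mono_tags) DiffD1 DiffD2 DiffI mem_Collect_eq, auto)
  qed
  then have "(\<Sum>x\<in>A. (1 :: bit)) = (\<Sum>x\<in>?F. 1)"
    using assms(1) sum.subset_diff[of ?F A "\<lambda>_. 1 :: bit"] by auto
  then show ?thesis by (simp only: sum_constant mult_1_right)
qed

definition odd_reps :: "nat \<Rightarrow> (int \<times> int) set" where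
  "odd_reps n = {(x, y). 0 < x \<and> 0 < y \<and> odd x \<and> odd y \<and> x\<^sup>2 + 3 * y\<^sup>2 = 8 * int n + 4}"

text \<open>With \<open>u = (x - y) / 2\<close> this maps \<open>(x, y)\<close> to \<open>((x + 3y)/2, |x - y|/2)\<close> if \<open>u\<close> is odd and
  to \<open>(|x - 3y|/2, (x + y)/2)\<close> otherwise; both maps preserve \<open>x\<^sup>2 + 3y\<^sup>2\<close>.\<close>
definition reps_flip :: "int \<times> int \<Rightarrow> int \<times> int" where
  "reps_flip v = (let u = (fst v - snd v) div 2 in
     if odd u then (u + 2 * snd v, \<bar>u\<bar>) else (\<bar>snd v - u\<bar>, u + snd v))"

lemma reps_flip_eq:
  "x = y + 2 * u \<Longrightarrow> reps_flip (x, y) = (if odd u then (u + 2 * y, \<bar>u\<bar>) else (\<bar>y - u\<bar>, u + y))"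
  by (simp add: reps_flip_def)

lemma odd_reps_obtain_diff:
  assumes "(x, y) \<in> odd_reps n"
  obtains u where "x = y + 2 * u"
proof -
  have "even (x - y)" using assms by (auto simp: odd_reps_def)
  then show ?thesis using that[of "(x - y) div 2"] by (auto elim!: evenE)
qed

lemma reps_flip_in:
  assumes v: "v \<in> odd_reps n"
  shows "reps_flip v \<in> odd_reps n"
proof -
  obtain x y where xy: "v = (x, y)" by (cases v)
  obtain u where u: "x = y + 2 * u" using odd_reps_obtain_diff v xy by blast
  have p: "0 < x" "0 < y" "odd x" "odd y" "x\<^sup>2 + 3 * y\<^sup>2 = 8 * int n + 4"
    using v xy by (auto simp: odd_reps_def)
  show ?thesis
  proof (cases "odd u")
    case True
    then have "u \<noteq> 0" by auto
    moreover have "(u + 2 * y)\<^sup>2 + 3 * \<bar>u\<bar>\<^sup>2 = x\<^sup>2 + 3 * y\<^sup>2"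
      using u by (simp add: power2_eq_square algebra_simps)
    ultimately show ?thesis using True p xy u by (simp add: reps_flip_eq odd_reps_def)
  next
    case False
    then have "odd (y - u)" using p by simp
    then have "y - u \<noteq> 0" by auto
    moreover have "\<bar>y - u\<bar>\<^sup>2 + 3 * (u + y)\<^sup>2 = x\<^sup>2 + 3 * y\<^sup>2"
      using u by (simp add: power2_eq_square algebra_simps)
    ultimately show ?thesis using False p xy u \<open>odd (y - u)\<close> by (simp add: reps_flip_eq odd_reps_def)
  qed
qed

lemma reps_flip_flip:
  assumes v: "v \<in> odd_reps n"
  shows "reps_flip (reps_flip v) = v"
proof -
  obtain x y where xy: "v = (x, y)" by (cases v)
  obtain u where u: "x = y + 2 * u" using odd_reps_obtain_diff v xy by blast
  have p: "0 < x" "0 < y" "odd x" "odd y" using v xy by (auto simp: odd_reps_def)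
  show ?thesis
  proof (cases "odd u")
    case True
    then have flip: "reps_flip v = (u + 2 * y, \<bar>u\<bar>)" using xy u by (simp add: reps_flip_eq)
    consider "u > 0" | "u < 0" using True by fastforce
    then show ?thesis
    proof cases
      case 1
      then have "reps_flip (u + 2 * y, \<bar>u\<bar>) = (if odd y then (y + 2 * \<bar>u\<bar>, \<bar>y\<bar>) else (\<bar>\<bar>u\<bar> - y\<bar>, y + \<bar>u\<bar>))"
        by (intro reps_flip_eq) simp
      then show ?thesis using flip p 1 xy u by simp
    next
      case 2
      then have "reps_flip (u + 2 * y, \<bar>u\<bar>)
          = (if odd (u + y) then (u + y + 2 * \<bar>u\<bar>, \<bar>u + y\<bar>) else (\<bar>\<bar>u\<bar> - (u + y)\<bar>, u + y + \<bar>u\<bar>))"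
        by (intro reps_flip_eq) simp
      moreover have "even (u + y)" using True p by simp
      ultimately show ?thesis using flip p 2 xy u by simp
    qed
  next
    case False
    then have flip: "reps_flip v = (\<bar>y - u\<bar>, u + y)" using xy u by (simp add: reps_flip_eq)
    show ?thesis
    proof (cases "u < y")
      case True
      then have "reps_flip (\<bar>y - u\<bar>, u + y)
          = (if odd (- u) then (- u + 2 * (u + y), \<bar>- u\<bar>) else (\<bar>(u + y) - (- u)\<bar>, - u + (u + y)))"
        by (intro reps_flip_eq) simp
      then show ?thesis using flip p True xy u False by simp
    next
      case False
      then have "reps_flip (\<bar>y - u\<bar>, u + y)
          = (if odd (- y) then (- y + 2 * (u + y), \<bar>- y\<bar>) else (\<bar>(u + y) - (- y)\<bar>, - y + (u + y)))"
        by (intro reps_flip_eq) simp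
      then show ?thesis using flip p False xy u by simp
    qed
  qed
qed

lemma reps_flip_fixed_iff:
  assumes v: "v \<in> odd_reps n"
  shows "reps_flip v = v \<longleftrightarrow> fst v = snd v \<or> fst v = 3 * snd v"
proof -
  obtain x y where xy: "v = (x, y)" by (cases v)
  obtain u where u: "x = y + 2 * u" using odd_reps_obtain_diff v xy by blast
  have "0 < y" "odd y" using v xy by (auto simp: odd_reps_def)
  then show ?thesis using xy u by (cases "odd u") (auto simp: reps_flip_eq)
qed

lemma finite_odd_reps: "finite (odd_reps n)"
proof (rule finite_subset)
  show "odd_reps n \<subseteq> {0..8 * int n + 4} \<times> {0..8 * int n + 4}"
  proof
    fix v assume "v \<in> odd_reps n"
    then obtain x y where v: "v = (x, y)" "0 < x" "0 < y" "x\<^sup>2 + 3 * y\<^sup>2 = 8 * int n + 4"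
      by (auto simp: odd_reps_def)
    have "x \<le> x\<^sup>2" "y \<le> y\<^sup>2" using v by (auto simp: power2_eq_square)
    then show "v \<in> {0..8 * int n + 4} \<times> {0..8 * int n + 4}" using v by auto
  qed
qed simp

lemma card_odd_reps_mod2:
  "(of_nat (card (odd_reps n)) :: bit)
   = of_nat (card {v \<in> odd_reps n. fst v = snd v \<or> fst v = 3 * snd v})"
proof -
  have "{v \<in> odd_reps n. reps_flip v = v} = {v \<in> odd_reps n. fst v = snd v \<or> fst v = 3 * snd v}"
    using reps_flip_fixed_iff by blast
  with card_mod2_eq_card_fixed_points[OF finite_odd_reps reps_flip_in reps_flip_flip]
  show ?thesis by simp
qed

lemma odd_square_eq: "(2 * j + 1)\<^sup>2 = 8 * triangular j + (1 :: nat)"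
  using two_times_triangular[of j] by (simp add: power2_eq_square algebra_simps)

lemma odd_square_eq_int: "(2 * int j + 1)\<^sup>2 = 8 * int (triangular j) + 1"
proof -
  have "int (2 * triangular j) = int j * (int j + 1)"
    by (simp only: two_times_triangular) (simp add: algebra_simps)
  then show ?thesis by (simp add: power2_eq_square algebra_simps)
qed

lemma pos_oddE:
  fixes x :: int
  assumes "0 < x" "odd x"
  obtains a where "x = 2 * int a + 1"
proof -
  obtain k where k: "x = 2 * k + 1" using assms(2) by (metis oddE)
  then show ?thesis using that[of "nat k"] assms(1) by simp
qed

definition tri_reps :: "nat \<Rightarrow> (nat \<times> nat) set" where
  "tri_reps n = {(a, b). triangular a + 3 * triangular b = n}"

lemma card_tri_reps: "card (tri_reps n) = card (odd_reps n)"
proof (rule bij_betw_same_card, rule bij_betw_imageI)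
  let ?g = "\<lambda>(a, b). (2 * int a + 1, 2 * int b + 1)"
  show "inj_on ?g (tri_reps n)"
    by (auto simp: inj_on_def)
  show "?g ` tri_reps n = odd_reps n"
  proof (rule set_eqI, rule iffI)
    fix v assume "v \<in> ?g ` tri_reps n"
    then show "v \<in> odd_reps n" by (auto simp: tri_reps_def odd_reps_def odd_square_eq_int)
  next
    fix v assume "v \<in> odd_reps n"
    then obtain x y where xy: "v = (x, y)" "0 < x" "0 < y" "odd x" "odd y" "x\<^sup>2 + 3 * y\<^sup>2 = 8 * int n + 4"
      by (auto simp: odd_reps_def)
    obtain a b where a: "x = 2 * int a + 1" and b: "y = 2 * int b + 1"
      using pos_oddE xy by metis
    have "int (triangular a) + 3 * int (triangular b) = int n"
      using xy a b by (simp add: odd_square_eq_int)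
    then have "triangular a + 3 * triangular b = n" by linarith
    then show "v \<in> ?g ` tri_reps n"
      using xy a b by (auto simp: tri_reps_def)
  qed
qed

lemma psi_bit_mult_compose3_nth: "(psi_bit * (psi_bit oo fps_X ^ 3)) $ n = of_nat (card (odd_reps n))"
proof -
  define Q where "Q i \<longleftrightarrow> (\<exists>a. i = triangular a) \<and> 3 dvd (n - i) \<and> (\<exists>b. (n - i) div 3 = triangular b)"
    for i
  have "(psi_bit * (psi_bit oo fps_X ^ 3)) $ n = (\<Sum>i=0..n. of_bool (Q i))"
    unfolding fps_mult_nth by (intro sum.cong) (auto simp: fps_compose_X_power_nth psi_bit_def Q_def)
  also have "\<dots> = of_nat (card {i\<in>{0..n}. Q i})"
    by (simp add: Int_def)
  also have "card {i\<in>{0..n}. Q i} = card (tri_reps n)"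
  proof (rule bij_betw_same_card[symmetric], rule bij_betw_imageI)
    show "inj_on (\<lambda>(a, b). triangular a) (tri_reps n)"
      by (auto simp: inj_on_def tri_reps_def)
    show "(\<lambda>(a, b). triangular a) ` tri_reps n = {i\<in>{0..n}. Q i}"
    proof (rule set_eqI, rule iffI)
      fix i assume "i \<in> (\<lambda>(a, b). triangular a) ` tri_reps n"
      then show "i \<in> {i\<in>{0..n}. Q i}" by (auto simp: tri_reps_def Q_def)
    next
      fix i assume "i \<in> {i\<in>{0..n}. Q i}"
      then obtain a b where "i = triangular a" "3 dvd (n - i)" "(n - i) div 3 = triangular b" "i \<le> n"
        by (auto simp: Q_def)
      then show "i \<in> (\<lambda>(a, b). triangular a) ` tri_reps n"
        by (auto simp: tri_reps_def intro!: image_eqI[where x = "(a, b)"])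
    qed
  qed
  finally show ?thesis by (simp add: card_tri_reps)
qed

lemma card_odd_reps_diagonal:
  "card {v \<in> odd_reps n. fst v = snd v} = of_bool (\<exists>c. n = 4 * triangular c)"
proof (cases "\<exists>c. n = 4 * triangular c")
  case True
  then obtain c where c: "n = 4 * triangular c" by blast
  have "{v \<in> odd_reps n. fst v = snd v} = {(2 * int c + 1, 2 * int c + 1)}"
  proof (rule set_eqI, rule iffI)
    fix v assume "v \<in> {v \<in> odd_reps n. fst v = snd v}"
    then obtain x where x: "v = (x, x)" "0 < x" "4 * x\<^sup>2 = 8 * int n + 4"
      by (auto simp: odd_reps_def)
    then have "x\<^sup>2 = (2 * int c + 1)\<^sup>2" using c by (simp add: odd_square_eq_int)
    then show "v \<in> {(2 * int c + 1, 2 * int c + 1)}" using x by (simp add: power2_eq_iff_nonneg)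
  qed (use c in \<open>auto simp: odd_reps_def odd_square_eq_int\<close>)
  then show ?thesis using True by simp
next
  case False
  have "{v \<in> odd_reps n. fst v = snd v} = {}"
  proof (rule ccontr)
    assume "{v \<in> odd_reps n. fst v = snd v} \<noteq> {}"
    then obtain x where x: "0 < x" "odd x" "4 * x\<^sup>2 = 8 * int n + 4" by (auto simp: odd_reps_def)
    obtain a where "x = 2 * int a + 1" using pos_oddE x by blast
    then have "n = 4 * triangular a" using x by (simp add: odd_square_eq_int)
    then show False using False by blast
  qed
  then show ?thesis using False by (simp only: card.empty) simp
qed

lemma card_odd_reps_triple:
  "card {v \<in> odd_reps n. fst v = 3 * snd v} = of_bool (\<exists>d. n = 12 * triangular d + 1)"
proof (cases "\<exists>d. n = 12 * triangular d + 1")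
  case True
  then obtain d where d: "n = 12 * triangular d + 1" by blast
  have "{v \<in> odd_reps n. fst v = 3 * snd v} = {(3 * (2 * int d + 1), 2 * int d + 1)}"
  proof (rule set_eqI, rule iffI)
    fix v assume "v \<in> {v \<in> odd_reps n. fst v = 3 * snd v}"
    then obtain y where y: "v = (3 * y, y)" "0 < y" "12 * y\<^sup>2 = 8 * int n + 4"
      by (auto simp: odd_reps_def power_mult_distrib)
    then have "y\<^sup>2 = (2 * int d + 1)\<^sup>2" using d by (simp add: odd_square_eq_int)
    then show "v \<in> {(3 * (2 * int d + 1), 2 * int d + 1)}" using y by (simp add: power2_eq_iff_nonneg)
  next
    fix v assume "v \<in> {(3 * (2 * int d + 1), 2 * int d + 1)}"
    moreover have "(3 * (2 * int d + 1))\<^sup>2 + 3 * (2 * int d + 1)\<^sup>2 = 8 * int n + 4"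
      using d by (simp only: power_mult_distrib odd_square_eq_int) simp
    ultimately show "v \<in> {v \<in> odd_reps n. fst v = 3 * snd v}" by (auto simp: odd_reps_def)
  qed
  then show ?thesis using True by simp
next
  case False
  have "{v \<in> odd_reps n. fst v = 3 * snd v} = {}"
  proof (rule ccontr)
    assume "{v \<in> odd_reps n. fst v = 3 * snd v} \<noteq> {}"
    then obtain y where y: "0 < y" "odd y" "12 * y\<^sup>2 = 8 * int n + 4"
      by (auto simp: odd_reps_def power_mult_distrib)
    obtain a where "y = 2 * int a + 1" using pos_oddE y by blast
    then have "n = 12 * triangular a + 1" using y by (simp add: odd_square_eq_int)
    then show False using False by blast
  qed
  then show ?thesis using False by (simp only: card.empty) simp
qed

lemma dvd_mult_triangular_iff:
  "(k :: nat) > 0 \<Longrightarrow> (k dvd n \<and> (\<exists>j. n div k = triangular j)) \<longleftrightarrow> (\<exists>c. n = k * triangular c)"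
  by (metis dvd_mult_div_cancel dvd_triv_left nonzero_mult_div_cancel_left not_gr0)

lemma psi_bit_compose4_plus_nth:
  "((psi_bit oo fps_X ^ 4) + fps_X * (psi_bit oo fps_X ^ 12)) $ n
   = of_bool (\<exists>c. n = 4 * triangular c) + of_bool (\<exists>d. n = 12 * triangular d + 1)"
proof -
  have "(psi_bit oo fps_X ^ 4) $ n = of_bool (\<exists>c. n = 4 * triangular c)"
    using dvd_mult_triangular_iff[of 4 n] by (auto simp: fps_compose_X_power_nth psi_bit_def)
  moreover have "(fps_X * (psi_bit oo fps_X ^ 12)) $ n = of_bool (\<exists>d. n = 12 * triangular d + 1)"
  proof (cases n)
    case (Suc m)
    then show ?thesis
      using dvd_mult_triangular_iff[of 12 m] by (auto simp: fps_compose_X_power_nth psi_bit_def fps_X_mult_nth)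
  qed simp
  ultimately show ?thesis by simp
qed

text \<open>Coefficientwise, the left side counts representations \<open>8n + 4 = x\<^sup>2 + 3y\<^sup>2\<close> in positive
  odd integers; modulo 2 only the fixed points \<open>x = y\<close> and \<open>x = 3y\<close> of \<open>reps_flip\<close> survive.\<close>
lemma psi_bit_mult_compose3:
  "psi_bit * (psi_bit oo fps_X ^ 3) = (psi_bit oo fps_X ^ 4) + fps_X * (psi_bit oo fps_X ^ 12)"
proof (rule fps_ext)
  fix n
  let ?A = "{v \<in> odd_reps n. fst v = snd v}" and ?B = "{v \<in> odd_reps n. fst v = 3 * snd v}"
  have "{v \<in> odd_reps n. fst v = snd v \<or> fst v = 3 * snd v} = ?A \<union> ?B" by auto
  moreover have "?A \<inter> ?B = {}" by (auto simp: odd_reps_def)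
  ultimately have "card {v \<in> odd_reps n. fst v = snd v \<or> fst v = 3 * snd v} = card ?A + card ?B"
    using finite_odd_reps by (simp add: card_Un_disjoint)
  then have "(psi_bit * (psi_bit oo fps_X ^ 3)) $ n = of_nat (card ?A) + of_nat (card ?B)"
    by (simp only: psi_bit_mult_compose3_nth card_odd_reps_mod2 of_nat_add)
  then show "(psi_bit * (psi_bit oo fps_X ^ 3)) $ n = ((psi_bit oo fps_X ^ 4) + fps_X * (psi_bit oo fps_X ^ 12)) $ n"
    by (simp only: psi_bit_compose4_plus_nth card_odd_reps_diagonal card_odd_reps_triple of_nat_of_bool)
qed

section \<open>The generating function of \<open>\<J>\<^sub>6\<close> modulo 2\<close>

lemma geom_inv_mult_one_minus: "j > 0 \<Longrightarrow> geom_inv j * (1 - fps_X ^ j) = 1"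
proof (rule fps_ext)
  fix n assume j: "j > 0"
  have "(geom_inv j * (1 - fps_X ^ j)) $ n = geom_inv j $ n - (geom_inv j * fps_X ^ j) $ n"
    by (simp add: algebra_simps)
  also have "\<dots> = (if n = 0 then 1 else 0)"
    using j by (auto simp: geom_inv_def fps_X_power_mult_right_nth dvd_imp_le elim: dvdE)
      (metis dvd_minus_self le_add_diff_inverse2 dvd_def)+
  finally show "(geom_inv j * (1 - fps_X ^ j)) $ n = 1 $ n" by simp
qed

lemma fps_mod2_geom_inv: "j > 0 \<Longrightarrow> fps_mod2 (geom_inv j) = inverse (1 + fps_X ^ j)"
  using arg_cong[OF geom_inv_mult_one_minus, of j fps_mod2]
  by (intro fps_inverse_unique[symmetric]) (simp_all add: fps_mod2_simps mult.commute)

lemma prod_one_plus_X_power_mult: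
  "k > 0 \<Longrightarrow> (\<Prod>j\<in>{1..M}. 1 + fps_X ^ (k * j) :: bit fps) = qpoch_bit M oo fps_X ^ k"
proof -
  have "(1 + fps_X ^ j) oo fps_X ^ k = (1 + fps_X ^ (k * j) :: bit fps)" if "k > 0" for j
    using that by (intro fps_ext) (auto simp: fps_compose_X_power_nth fps_X_power_nth)
  then show "k > 0 \<Longrightarrow> ?thesis"
    unfolding qpoch_bit_def by (subst fps_compose_prod_distrib) simp_all
qed

lemma fps_inverse_prod: "(\<Prod>j\<in>A. inverse (f j :: 'a::field fps)) = inverse (\<Prod>j\<in>A. f j)"
  by (induction A rule: infinite_finite_induct) (simp_all add: fps_inverse_mult)

text \<open>The eta-quotient \<open>q (j\<^sub>6 + 3)\<close> modulo 2.\<close>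
definition eta_quot_bit :: "bit fps" where
  "eta_quot_bit = (euler_bit oo fps_X\<^sup>2) ^ 3 * (euler_bit oo fps_X ^ 3) ^ 9
     * inverse euler_bit ^ 3 * inverse (euler_bit oo fps_X ^ 6) ^ 9"

lemma fps_mod2_eta_quot_trunc:
  "fps_mod2 (eta_quot_trunc M) = (qpoch_bit M oo fps_X\<^sup>2) ^ 3 * (qpoch_bit M oo fps_X ^ 3) ^ 9
     * inverse (qpoch_bit M) ^ 3 * inverse (qpoch_bit M oo fps_X ^ 6) ^ 9"
proof -
  have "fps_mod2 (eta_quot_trunc M) = (\<Prod>j\<in>{1..M}. ((1 + fps_X ^ (2 * j)) * (1 + fps_X ^ (3 * j)) ^ 3
          * inverse (1 + fps_X ^ (1 * j)) * inverse (1 + fps_X ^ (6 * j)) ^ 3) ^ 3)"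
    unfolding eta_quot_trunc_def fps_mod2_prod
    by (intro prod.cong refl) (simp add: fps_mod2_simps fps_mod2_geom_inv)
  also have "\<dots> = (\<Prod>j\<in>{1..M}. 1 + fps_X ^ (2 * j)) ^ 3 * (\<Prod>j\<in>{1..M}. 1 + fps_X ^ (3 * j)) ^ 9
       * (\<Prod>j\<in>{1..M}. inverse (1 + fps_X ^ (1 * j))) ^ 3 * (\<Prod>j\<in>{1..M}. inverse (1 + fps_X ^ (6 * j))) ^ 9"
    by (simp add: prod.distrib prod_power_distrib power_mult_distrib power_mult[symmetric])
  also have "\<dots> = (qpoch_bit M oo fps_X\<^sup>2) ^ 3 * (qpoch_bit M oo fps_X ^ 3) ^ 9
       * inverse (qpoch_bit M) ^ 3 * inverse (qpoch_bit M oo fps_X ^ 6) ^ 9"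
    by (simp only: fps_inverse_prod prod_one_plus_X_power_mult zero_less_numeral)
      (simp add: qpoch_bit_def)
  finally show ?thesis .
qed

lemma fps_cutoff_eta_quot_trunc:
  "fps_cutoff (M + 1) (fps_mod2 (eta_quot_trunc M)) = fps_cutoff (M + 1) eta_quot_bit"
proof -
  have e: "fps_cutoff (M + 1) (qpoch_bit M) = fps_cutoff (M + 1) euler_bit"
    using fps_cutoff_euler_bit[of M] by simp
  have c: "fps_cutoff (M + 1) (qpoch_bit M oo fps_X ^ k) = fps_cutoff (M + 1) (euler_bit oo fps_X ^ k)"
    if "k > 0" for k
    using that e by (rule fps_cutoff_compose_X_power_cong)
  have "qpoch_bit M $ 0 = 1"
    using fps_cutoff_eqD[OF fps_cutoff_euler_bit[of M], of 0] by simp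
  then show ?thesis unfolding fps_mod2_eta_quot_trunc eta_quot_bit_def
    by (intro fps_cutoff_mult_cong fps_cutoff_power_cong fps_cutoff_inverse_cong c e) simp_all
qed

lemma J6_mod2: "N \<ge> 1 \<Longrightarrow> (of_int (J6 N) :: bit) = eta_quot_bit $ (N + 1)"
  using fps_cutoff_eqD[OF fps_cutoff_eta_quot_trunc[of "N + 1"], of "N + 1"] by (simp add: J6_def)

text \<open>By \<open>f(q\<^sup>2) = f(q)\<^sup>2\<close> and Jacobi's identity.\<close>
lemma eta_quot_bit_eq: "eta_quot_bit = psi_bit * (inverse psi_bit ^ 3 oo fps_X ^ 3)"
proof -
  define B where "B = euler_bit oo fps_X ^ 3"
  have B0: "B $ 0 = 1" by (simp add: B_def)
  have E6: "euler_bit oo fps_X ^ 6 = B\<^sup>2"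
    unfolding B_def bit_fps_square_eq_compose[of "euler_bit oo fps_X ^ 3"]
    by (simp add: fps_compose_X_power_compose_X_power)
  have "eta_quot_bit = euler_bit ^ 3 * inverse B ^ 9 * ((euler_bit * inverse euler_bit) ^ 3 * (B * inverse B) ^ 9)"
    unfolding eta_quot_bit_def E6 bit_fps_square_eq_compose[symmetric] B_def[symmetric] fps_inverse_power
    by algebra
  also have "\<dots> = euler_bit ^ 3 * inverse B ^ 9"
    using B0 by (simp add: inverse_mult_eq_1')
  also have "inverse B ^ 9 = (inverse (B ^ 3)) ^ 3"
    by (simp add: fps_inverse_power flip: power_mult)
  also have "B ^ 3 = psi_bit oo fps_X ^ 3"
    by (simp add: B_def fps_compose_power euler_bit_cube)
  also have "inverse (psi_bit oo fps_X ^ 3) = inverse psi_bit oo fps_X ^ 3"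
    by (rule fps_inverse_compose[symmetric]) simp_all
  also have "(inverse psi_bit oo fps_X ^ 3) ^ 3 = inverse psi_bit ^ 3 oo fps_X ^ 3"
    by (simp add: fps_compose_power)
  finally show ?thesis by (simp add: euler_bit_cube)
qed

lemma triangular_3_mult_Suc: "triangular (3 * r + 1) = 9 * triangular r + 1"
  using two_times_triangular[of "3 * r + 1"] two_times_triangular[of r] by (simp add: algebra_simps)

text \<open>\<open>triangular j \<equiv> 1 (mod 3)\<close> forces \<open>j \<equiv> 1 (mod 3)\<close>.\<close>
lemma psi_bit_nth_3_mult_Suc: "psi_bit $ (3 * t + 1) = (psi_bit oo fps_X ^ 3) $ t"
proof -
  have "(\<exists>j. 3 * t + 1 = triangular j) \<longleftrightarrow> (\<exists>r. t = 3 * triangular r)"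
  proof
    assume "\<exists>j. 3 * t + 1 = triangular j"
    then obtain j where j: "3 * t + 1 = triangular j" by blast
    have "j mod 3 = 1"
    proof (rule ccontr)
      assume "j mod 3 \<noteq> 1"
      then have "3 dvd j \<or> 3 dvd (j + 1)" by presburger
      then have "3 dvd 2 * (3 * t + 1)"
        unfolding j two_times_triangular by (metis dvd_mult dvd_mult2)
      then show False by presburger
    qed
    then have "j = 3 * (j div 3) + 1" using div_mult_mod_eq[of j 3] by linarith
    then have "triangular j = 9 * triangular (j div 3) + 1"
      by (metis triangular_3_mult_Suc)
    then have "t = 3 * triangular (j div 3)" using j by linarith
    then show "\<exists>r. t = 3 * triangular r" ..
  next
    assume "\<exists>r. t = 3 * triangular r"
    then obtain r where "t = 3 * triangular r" ..
    then have "3 * t + 1 = triangular (3 * r + 1)" by (simp only: triangular_3_mult_Suc)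
    then show "\<exists>j. 3 * t + 1 = triangular j" ..
  qed
  then show ?thesis
    using dvd_mult_triangular_iff[of 3 t] by (auto simp: psi_bit_def fps_compose_X_power_nth)
qed

lemma fps_mult_compose3_nth:
  "(f * (g oo fps_X ^ 3)) $ (3 * M + 1) = (\<Sum>t\<in>{0..M}. f $ (3 * t + 1) * g $ (M - t))"
proof -
  define F where "F i = f $ i * (g oo fps_X ^ 3) $ (3 * M + 1 - i)" for i
  have "(f * (g oo fps_X ^ 3)) $ (3 * M + 1) = (\<Sum>i\<in>{0..3 * M + 1}. F i)"
    by (simp add: fps_mult_nth F_def)
  also have "\<dots> = (\<Sum>i\<in>(\<lambda>t. 3 * t + 1) ` {0..M}. F i)"
  proof (rule sum.mono_neutral_right)
    show "\<forall>i\<in>{0..3 * M + 1} - (\<lambda>t. 3 * t + 1) ` {0..M}. F i = 0"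
    proof
      fix i assume i: "i \<in> {0..3 * M + 1} - (\<lambda>t. 3 * t + 1) ` {0..M}"
      have "\<not> 3 dvd (3 * M + 1 - i)"
      proof
        assume "3 dvd (3 * M + 1 - i)"
        then obtain q where "3 * M + 1 - i = 3 * q" by blast
        then have "i = 3 * (M - q) + 1" "M - q \<le> M" using i by auto
        then show False using i by auto
      qed
      then show "F i = 0" by (simp add: F_def fps_compose_X_power_nth)
    qed
  qed auto
  also have "\<dots> = (\<Sum>t\<in>{0..M}. F (3 * t + 1))"
    by (subst sum.reindex) (auto simp: inj_on_def)
  also have "\<dots> = (\<Sum>t\<in>{0..M}. f $ (3 * t + 1) * g $ (M - t))"
  proof (rule sum.cong)
    fix t assume "t \<in> {0..M}"
    then have "3 * M + 1 - (3 * t + 1) = 3 * (M - t)" by simp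
    then show "F (3 * t + 1) = f $ (3 * t + 1) * g $ (M - t)"
      by (simp add: F_def fps_compose_X_power_nth)
  qed simp
  finally show ?thesis .
qed

lemma psi_bit_mult_inverse: "psi_bit * inverse psi_bit = 1"
  by (simp add: inverse_mult_eq_1')

lemma psi_bit_compose3_mult_inverse_cube:
  "(psi_bit oo fps_X ^ 3) * inverse psi_bit ^ 3
   = 1 + fps_X * ((psi_bit oo fps_X ^ 12) * inverse (psi_bit oo fps_X ^ 4))"
proof -
  define i where "i = inverse psi_bit"
  have psi4: "(psi_bit oo fps_X ^ 4) * i ^ 4 = 1" and i4: "inverse (psi_bit oo fps_X ^ 4) = i ^ 4"
    using psi_bit_mult_inverse
    by (simp_all add: i_def bit_fps_power4_eq_compose[symmetric] fps_inverse_power flip: power_mult_distrib)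
  have "(psi_bit oo fps_X ^ 3) * i ^ 3 = (psi_bit * (psi_bit oo fps_X ^ 3)) * i ^ 4"
    using psi_bit_mult_inverse unfolding i_def[symmetric] by algebra
  also have "\<dots> = (psi_bit oo fps_X ^ 4) * i ^ 4 + fps_X * ((psi_bit oo fps_X ^ 12) * i ^ 4)"
    by (simp add: psi_bit_mult_compose3 algebra_simps)
  finally show ?thesis by (simp add: psi4 i4 flip: i_def)
qed

lemma psi_bit_compose3_mult_inverse:
  "(psi_bit oo fps_X ^ 3) * inverse psi_bit
   = (psi_bit oo fps_X\<^sup>2) + fps_X * (((psi_bit oo fps_X ^ 6) * psi_bit * inverse (psi_bit oo fps_X\<^sup>2)) oo fps_X\<^sup>2)"
proof -
  define i where "i = inverse psi_bit"
  have psi4: "(psi_bit oo fps_X ^ 4) * i ^ 4 = 1"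
    using psi_bit_mult_inverse
    by (simp add: i_def bit_fps_power4_eq_compose[symmetric] flip: power_mult_distrib)
  have i4: "i ^ 4 = inverse (psi_bit oo fps_X\<^sup>2) oo fps_X\<^sup>2"
    by (simp add: i_def fps_inverse_compose fps_compose_X_power_compose_X_power
        bit_fps_power4_eq_compose[symmetric] fps_inverse_power)
  have "(psi_bit oo fps_X ^ 3) * i = (psi_bit * (psi_bit oo fps_X ^ 3)) * psi_bit\<^sup>2 * i ^ 4"
    using psi_bit_mult_inverse unfolding i_def[symmetric] by algebra
  also have "\<dots> = ((psi_bit oo fps_X ^ 4) * i ^ 4) * psi_bit\<^sup>2
      + fps_X * ((psi_bit oo fps_X ^ 12) * psi_bit\<^sup>2 * i ^ 4)"
    by (simp add: psi_bit_mult_compose3 algebra_simps)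
  also have "\<dots> = (psi_bit oo fps_X\<^sup>2) + fps_X * ((psi_bit oo fps_X ^ 12) * (psi_bit oo fps_X\<^sup>2) * i ^ 4)"
    by (simp add: psi4 bit_fps_square_eq_compose[of psi_bit])
  also note i4
  also have "(psi_bit oo fps_X ^ 12) * (psi_bit oo fps_X\<^sup>2) * (inverse (psi_bit oo fps_X\<^sup>2) oo fps_X\<^sup>2)
      = ((psi_bit oo fps_X ^ 6) * psi_bit * inverse (psi_bit oo fps_X\<^sup>2)) oo fps_X\<^sup>2"
    by (simp add: fps_compose_mult_distrib fps_compose_X_power_compose_X_power)
  finally show ?thesis by (simp add: i_def)
qed

text \<open>For \<open>M = 8k + 1\<close>: the coefficient of \<open>q\<^bsup>3M+1\<^esup>\<close> in \<open>\<psi>(q) / \<psi>(q\<^sup>3)\<^sup>3\<close> is that of \<open>q\<^sup>M\<close>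
  in \<open>\<psi>(q\<^sup>3) / \<psi>(q)\<^sup>3\<close>, i.e.\ that of \<open>q\<^bsup>8k\<^esup>\<close> in \<open>\<psi>(q\<^bsup>12\<^esup>) / \<psi>(q\<^sup>4)\<close>, i.e.\ that of
  \<open>q\<^bsup>2k\<^esup>\<close> in \<open>\<psi>(q\<^sup>3) / \<psi>(q)\<close>.\<close>
lemma eta_quot_bit_nth:
  assumes M: "M = 8 * k + 1"
  shows "eta_quot_bit $ (3 * M + 1) = psi_bit $ k"
proof -
  let ?R = "(psi_bit oo fps_X ^ 3) * inverse psi_bit"
  have "eta_quot_bit $ (3 * M + 1) = (\<Sum>t\<in>{0..M}. psi_bit $ (3 * t + 1) * (inverse psi_bit ^ 3) $ (M - t))"
    unfolding eta_quot_bit_eq by (rule fps_mult_compose3_nth)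
  also have "\<dots> = ((psi_bit oo fps_X ^ 3) * inverse psi_bit ^ 3) $ M"
    by (simp only: fps_mult_nth psi_bit_nth_3_mult_Suc)
  also have "\<dots> = ((psi_bit oo fps_X ^ 12) * inverse (psi_bit oo fps_X ^ 4)) $ (8 * k)"
    using M by (simp add: psi_bit_compose3_mult_inverse_cube)
  also have "(psi_bit oo fps_X ^ 12) * inverse (psi_bit oo fps_X ^ 4) = ?R oo fps_X ^ 4"
    by (simp add: fps_compose_mult_distrib fps_compose_X_power_compose_X_power fps_inverse_compose)
  also have "(?R oo fps_X ^ 4) $ (8 * k) = ?R $ (2 * k)"
    by (simp add: fps_compose_X_power_nth)
  also have "\<dots> = psi_bit $ k"
    unfolding psi_bit_compose3_mult_inverse
    by (cases k) (simp_all add: fps_X_mult_nth fps_compose_X_power_nth)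
  finally show ?thesis .
qed

lemma J6_three_times_mod2:
  assumes "M mod 8 = 1"
  shows "(of_int (J6 (3 * M)) :: bit) = of_bool (\<exists>s. M = s\<^sup>2)"
proof -
  define k where "k = M div 8"
  have M: "M = 8 * k + 1" using assms div_mult_mod_eq[of M 8] unfolding k_def by linarith
  have "(of_int (J6 (3 * M)) :: bit) = eta_quot_bit $ (3 * M + 1)"
    using M by (intro J6_mod2) simp
  also have "\<dots> = of_bool (\<exists>j. k = triangular j)"
    using eta_quot_bit_nth[OF M] by (simp add: psi_bit_def)
  also have "(\<exists>j. k = triangular j) \<longleftrightarrow> (\<exists>s. M = s\<^sup>2)"
  proof
    assume "\<exists>j. k = triangular j"
    then show "\<exists>s. M = s\<^sup>2" using M odd_square_eq by metis
  next
    assume "\<exists>s. M = s\<^sup>2"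
    then obtain s where s: "M = s\<^sup>2" by blast
    have "odd M" using M by simp
    then have "odd s" using s by simp
    then obtain j where "s = 2 * j + 1" by (metis oddE)
    then show "\<exists>j. k = triangular j" using M s odd_square_eq[of j] by auto
  qed
  finally show ?thesis .
qed

lemma prime_square_mult_is_square_iff:
  fixes p m :: nat
  assumes "prime p"
  shows "(\<exists>s. p\<^sup>2 * m = s\<^sup>2) \<longleftrightarrow> (\<exists>s. m = s\<^sup>2)"
proof
  assume "\<exists>s. p\<^sup>2 * m = s\<^sup>2"
  then obtain s where s: "p\<^sup>2 * m = s\<^sup>2" by blast
  then have "p dvd s\<^sup>2"
    unfolding s[symmetric] by (simp add: power2_eq_square mult.assoc)
  then have "p dvd s"
    using assms by (simp add: prime_dvd_power_iff)
  then obtain t where "s = p * t" by blast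
  then have "m = t\<^sup>2"
    using s assms by (simp add: power_mult_distrib prime_gt_0_nat)
  then show "\<exists>s. m = s\<^sup>2" by blast
next
  assume "\<exists>s. m = s\<^sup>2"
  then obtain s where "m = s\<^sup>2" by blast
  then have "p\<^sup>2 * m = (p * s)\<^sup>2" by (simp add: power_mult_distrib)
  then show "\<exists>s. p\<^sup>2 * m = s\<^sup>2" by blast
qed

lemma odd_square_mod_8: "odd (p :: nat) \<Longrightarrow> p\<^sup>2 mod 8 = 1"
  by (elim oddE) (simp only: odd_square_eq, simp)

lemma J6_three_prime_square_cong:
  assumes "prime p" and "odd p" and "M mod 8 = 1"
  shows "[J6 (3 * (p\<^sup>2 * M)) = J6 (3 * M)] (mod 2)"
proof -
  have "(p\<^sup>2 * M) mod 8 = 1"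
    using assms(2,3) mod_mult_eq[of "p\<^sup>2" 8 M] by (simp add: odd_square_mod_8)
  then have "(of_int (J6 (3 * (p\<^sup>2 * M))) :: bit) = of_int (J6 (3 * M))"
    using assms by (simp add: J6_three_times_mod2 prime_square_mult_is_square_iff)
  then show ?thesis by (simp add: of_int_bit_eq_iff)
qed

lemma odd_cong_mult_cancel_mod_8:
  fixes p c :: nat
  assumes "odd p" and "[p * c = p] (mod 8)"
  shows "[c = 1] (mod 8)"
proof -
  have "coprime p 8"
    using assms(1) coprime_power_right_iff[of p 2 3] by simp
  with assms(2) show ?thesis
    using cong_mult_lcancel_nat[of p 8 c 1] by simp
qed

theorem theorem3p6:
  fixes k n i p \<delta> :: nat
  assumes "k \<ge> 1"
    and "i \<in> {3, 5, 7}"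
    and "prime p"
    and "p mod 8 = i"
    and "p dvd 8 * \<delta> + i"
  shows "[J6 (3 * p * (8 * p ^ k * n + 8 * \<delta> + i))
          = J6 (24 * (p ^ (k - 1) * n + (8 * \<delta> + i - p) div (8 * p)) + 3)] (mod 2)"
proof -
  obtain c where c: "8 * \<delta> + i = p * c" using assms(5) by blast
  have "p mod 8 = 3 \<or> p mod 8 = 5 \<or> p mod 8 = 7" using assms(2,4) by auto
  then have "odd p" by presburger
  moreover have "[p * c = p] (mod 8)"
    unfolding cong_def c[symmetric] using assms(2,4) by auto
  ultimately have "[c = 1] (mod 8)" by (rule odd_cong_mult_cancel_mod_8)
  then have "c div 8 * 8 + 1 = c" using div_mult_mod_eq[of c 8] by (simp add: cong_def)
  then obtain q where q: "c = 8 * q + 1" by (metis mult.commute)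
  define M where "M = 8 * (p ^ (k - 1) * n + q) + 1"
  have "p ^ k = p * p ^ (k - 1)" using assms(1) by (simp flip: power_Suc)
  then have "8 * p ^ k * n + 8 * \<delta> + i = p * M"
    unfolding M_def add.assoc c q by (simp add: algebra_simps)
  then have N1: "3 * p * (8 * p ^ k * n + 8 * \<delta> + i) = 3 * (p\<^sup>2 * M)"
    by (simp add: power2_eq_square)
  have "(8 * \<delta> + i - p) div (8 * p) = q"
    using prime_gt_0_nat[OF assms(3)] unfolding c q by (simp add: algebra_simps)
  then have N2: "24 * (p ^ (k - 1) * n + (8 * \<delta> + i - p) div (8 * p)) + 3 = 3 * M"
    by (simp add: M_def)
  show ?thesis
    unfolding N1 N2 using assms(3) \<open>odd p\<close> by (rule J6_three_prime_square_cong) (simp add: M_def)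
qed

end
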